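(* Let $F_1,F_2\colon\mathbf{A}\to\mathbf{B}$ be lenses, and let $E\colon\mathbf{B}\to\mathbf{C}$ be a lens with $E\circ F_1=E\circ F_2$ such that the get functor $UE$ is a coequaliser of $UF_1$ and $UF_2$ in $\mathbf{Cat}$. Let $G\colon\mathbf{B}\to\mathbf{D}$ be a lens with $G\circ F_1=G\circ F_2$, and let $H\colon\mathbf{C}\to\mathbf{D}$ be the unique functor with $UG=H\circ UE$. Then there is a unique lens structure on $H$ such that $\varphi_{H,EB}(d)=E\,\varphi_{G,B}(d)$ for all objects $B$ of $\mathbf{B}$ and all morphisms $d$ of $\mathbf{D}$ with domain $GB$.
   Context: A lens $F\colon \mathbf{A}\to\mathbf{B}$ between small categories consists of a functor $F\colon\mathbf{A}\to\mathbf{B}$ (the get functor) together with, for each object $A$ of $\mathbf{A}$, a function $\varphi_{F,A}$ from the set of morphisms of $\mathbf{B}$ with domain $FA$ to the set of morphisms of $\mathbf{A}$ with domain $A$, such that: $F(\varphi_{F,A}b)=b$; $\varphi_{F,A}(\mathrm{id}_{FA})=\mathrm{id}_A$; and $\varphi_{F,A}(b'\circ b)=\varphi_{F,A'}(b')\circ\varphi_{F,A}(b)$ whenever $b$ has domain $FA$, $A'$ is the codomain of $\varphi_{F,A}b$, and $b'$ has domain $FA'$. A lens structure on a functor is a choice of such put functions. $\mathbf{Lens}$ is the category of small categories and lenses, with composite of $F\colon\mathbf{A}\to\mathbf{B}$, $G\colon\mathbf{B}\to\mathbf{C}$ having get functor $G\circ F$ and puts $\varphi_{G\circ F,A}(c)=\varphi_{F,A}(\varphi_{G,FA}(c))$.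 $U\colon\mathbf{Lens}\to\mathbf{Cat}$ sends a lens to its get functor. *)

theory Defs
  imports Main
begin

text \<open>Small categories, represented by carriers of objects and arrows together with
domain, codomain, identity and composition (Comp g f = g o f).\<close>

record ('o, 'a) cat =
  Obj  :: "'o set"
  Arr  :: "'a set"
  Dom  :: "'a \<Rightarrow> 'o"
  Cod  :: "'a \<Rightarrow> 'o"
  Idn  :: "'o \<Rightarrow> 'a"
  Comp :: "'a \<Rightarrow> 'a \<Rightarrow> 'a"

definition is_cat :: "('o, 'a) cat \<Rightarrow> bool" where
  "is_cat C \<longleftrightarrow>
     (\<forall>f \<in> Arr C. Dom C f \<in> Obj C \<and> Cod C f \<in> Obj C) \<and>
     (\<forall>x \<in> Obj C. Idn C x \<in> Arr C \<and> Dom C (Idn C x) = x \<and> Cod C (Idn C x) = x) \<and>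
     (\<forall>f \<in> Arr C. \<forall>g \<in> Arr C. Cod C f = Dom C g \<longrightarrow>
        Comp C g f \<in> Arr C \<and> Dom C (Comp C g f) = Dom C f \<and> Cod C (Comp C g f) = Cod C g) \<and>
     (\<forall>f \<in> Arr C. Comp C f (Idn C (Dom C f)) = f \<and> Comp C (Idn C (Cod C f)) f = f) \<and>
     (\<forall>f \<in> Arr C. \<forall>g \<in> Arr C. \<forall>h \<in> Arr C. Cod C f = Dom C g \<longrightarrow> Cod C g = Dom C h \<longrightarrow>
        Comp C h (Comp C g f) = Comp C (Comp C h g) f)"

text \<open>A functor is given by its object map and arrow map (only their values on the
carriers matter).\<close>

definition is_functor ::
  "('o1, 'a1) cat \<Rightarrow> ('o2, 'a2) cat \<Rightarrow> ('o1 \<Rightarrow> 'o2) \<Rightarrow> ('a1 \<Rightarrow> 'a2) \<Rightarrow> bool" where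
  "is_functor A B Fo Fa \<longleftrightarrow>
     (\<forall>x \<in> Obj A. Fo x \<in> Obj B) \<and>
     (\<forall>f \<in> Arr A. Fa f \<in> Arr B \<and> Dom B (Fa f) = Fo (Dom A f) \<and> Cod B (Fa f) = Fo (Cod A f)) \<and>
     (\<forall>x \<in> Obj A. Fa (Idn A x) = Idn B (Fo x)) \<and>
     (\<forall>f \<in> Arr A. \<forall>g \<in> Arr A. Cod A f = Dom A g \<longrightarrow> Fa (Comp A g f) = Comp B (Fa g) (Fa f))"

definition functor_eq ::
  "('o1, 'a1) cat \<Rightarrow> ('o1 \<Rightarrow> 'o2) \<Rightarrow> ('a1 \<Rightarrow> 'a2) \<Rightarrow> ('o1 \<Rightarrow> 'o2) \<Rightarrow> ('a1 \<Rightarrow> 'a2) \<Rightarrow> bool" where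
  "functor_eq A Fo Fa Go Ga \<longleftrightarrow> (\<forall>x \<in> Obj A. Fo x = Go x) \<and> (\<forall>f \<in> Arr A. Fa f = Ga f)"

text \<open>A lens A -> B: a get functor (Fo, Fa) with put functions P, where P x b is
the lift of b (an arrow of B with domain Fo x) at the object x of A.\<close>

definition is_lens ::
  "('o1, 'a1) cat \<Rightarrow> ('o2, 'a2) cat \<Rightarrow> ('o1 \<Rightarrow> 'o2) \<Rightarrow> ('a1 \<Rightarrow> 'a2) \<Rightarrow> ('o1 \<Rightarrow> 'a2 \<Rightarrow> 'a1) \<Rightarrow> bool" where
  "is_lens A B Fo Fa P \<longleftrightarrow>
     is_functor A B Fo Fa \<and>
     (\<forall>x \<in> Obj A. \<forall>b \<in> Arr B. Dom B b = Fo x \<longrightarrow>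
        P x b \<in> Arr A \<and> Dom A (P x b) = x \<and> Fa (P x b) = b) \<and>
     (\<forall>x \<in> Obj A. P x (Idn B (Fo x)) = Idn A x) \<and>
     (\<forall>x \<in> Obj A. \<forall>b \<in> Arr B. \<forall>b' \<in> Arr B.
        Dom B b = Fo x \<longrightarrow> Dom B b' = Fo (Cod A (P x b)) \<longrightarrow>
        P x (Comp B b' b) = Comp A (P (Cod A (P x b)) b') (P x b))"

definition lens_comp_put ::
  "('o1 \<Rightarrow> 'o2) \<Rightarrow> ('o1 \<Rightarrow> 'a2 \<Rightarrow> 'a1) \<Rightarrow> ('o2 \<Rightarrow> 'a3 \<Rightarrow> 'a2) \<Rightarrow> ('o1 \<Rightarrow> 'a3 \<Rightarrow> 'a1)" where
  "lens_comp_put Fo P Q = (\<lambda>x c. P x (Q (Fo x) c))"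

definition lens_eq ::
  "('o1, 'a1) cat \<Rightarrow> ('o2, 'a2) cat \<Rightarrow>
   ('o1 \<Rightarrow> 'o2) \<Rightarrow> ('a1 \<Rightarrow> 'a2) \<Rightarrow> ('o1 \<Rightarrow> 'a2 \<Rightarrow> 'a1) \<Rightarrow>
   ('o1 \<Rightarrow> 'o2) \<Rightarrow> ('a1 \<Rightarrow> 'a2) \<Rightarrow> ('o1 \<Rightarrow> 'a2 \<Rightarrow> 'a1) \<Rightarrow> bool" where
  "lens_eq A B Fo Fa P Go Ga Q \<longleftrightarrow>
     functor_eq A Fo Fa Go Ga \<and>
     (\<forall>x \<in> Obj A. \<forall>b \<in> Arr B. Dom B b = Fo x \<longrightarrow> P x b = Q x b)"

text \<open>(Eo,Ea) : B -> C is a coequaliser in Cat of (F1o,F1a), (F2o,F2a) : A -> B, where the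
universal property is tested against all categories whose objects have type 'x and
whose arrows have type 'y (the type argument T fixes this test universe).\<close>

definition cat_coequaliser ::
  "('x \<times> 'y) itself \<Rightarrow> ('o1, 'a1) cat \<Rightarrow> ('o2, 'a2) cat \<Rightarrow> ('o3, 'a3) cat \<Rightarrow>
   ('o1 \<Rightarrow> 'o2) \<Rightarrow> ('a1 \<Rightarrow> 'a2) \<Rightarrow> ('o1 \<Rightarrow> 'o2) \<Rightarrow> ('a1 \<Rightarrow> 'a2) \<Rightarrow>
   ('o2 \<Rightarrow> 'o3) \<Rightarrow> ('a2 \<Rightarrow> 'a3) \<Rightarrow> bool" where
  "cat_coequaliser T A B C F1o F1a F2o F2a Eo Ea \<longleftrightarrow>
     is_functor B C Eo Ea \<and>
     functor_eq A (Eo \<circ> F1o) (Ea \<circ> F1a) (Eo \<circ> F2o) (Ea \<circ> F2a) \<and>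
     (\<forall>(X :: ('x, 'y) cat) Ko Ka.
        is_cat X \<longrightarrow> is_functor B X Ko Ka \<longrightarrow>
        functor_eq A (Ko \<circ> F1o) (Ka \<circ> F1a) (Ko \<circ> F2o) (Ka \<circ> F2a) \<longrightarrow>
        (\<exists>Lo La. is_functor C X Lo La \<and> functor_eq B (Lo \<circ> Eo) (La \<circ> Ea) Ko Ka) \<and>
        (\<forall>Lo La Lo' La'.
           is_functor C X Lo La \<longrightarrow> functor_eq B (Lo \<circ> Eo) (La \<circ> Ea) Ko Ka \<longrightarrow>
           is_functor C X Lo' La' \<longrightarrow> functor_eq B (Lo' \<circ> Eo) (La' \<circ> Ea) Ko Ka \<longrightarrow>
           functor_eq C Lo La Lo' La'))"

end

theory Submission
  imports Defs
begin

text \<open>The put of H is forced to be \<open>\<phi>\<^sub>H(E b, d) = E \<phi>\<^sub>G(b, d)\<close>, so everything hinges on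
this being well defined. Functors into the indiscrete category on two objects are the same
as sets of objects; testing the coequaliser against them shows that \<open>UE\<close> is surjective on
objects, and that a set of objects which is saturated for the relation \<open>F\<^sub>1 a \<sim> F\<^sub>2 a\<close> and
contains b also contains every b' with \<open>E b' = E b\<close>. The sets on which \<open>E \<phi>\<^sub>G(-, d)\<close> takes
a fixed value are saturated, since \<open>E \<phi>\<^sub>G(F\<^sub>i a, d) = E F\<^sub>i \<phi>\<^sub>i(a, \<phi>\<^sub>G(F\<^sub>i a, d))\<close> and both
\<open>E F\<^sub>1 = E F\<^sub>2\<close> as functors and \<open>G F\<^sub>1 = G F\<^sub>2\<close> as lenses. The lens laws for \<open>\<phi>\<^sub>H\<close> are then
the images under E of those for \<open>\<phi>\<^sub>G\<close>, using \<open>H E = G\<close>.\<close>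

lemma is_catD:
  assumes "is_cat C"
  shows "f \<in> Arr C \<Longrightarrow> Dom C f \<in> Obj C"
    and "f \<in> Arr C \<Longrightarrow> Cod C f \<in> Obj C"
    and "x \<in> Obj C \<Longrightarrow> Idn C x \<in> Arr C"
    and "x \<in> Obj C \<Longrightarrow> Dom C (Idn C x) = x"
    and "f \<in> Arr C \<Longrightarrow> g \<in> Arr C \<Longrightarrow> Cod C f = Dom C g \<Longrightarrow> Comp C g f \<in> Arr C"
    and "f \<in> Arr C \<Longrightarrow> g \<in> Arr C \<Longrightarrow> Cod C f = Dom C g \<Longrightarrow> Dom C (Comp C g f) = Dom C f"
  using assms unfolding is_cat_def by auto

lemma is_functorD:
  assumes "is_functor A B Fo Fa"
  shows "x \<in> Obj A \<Longrightarrow> Fo x \<in> Obj B"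
    and "f \<in> Arr A \<Longrightarrow> Fa f \<in> Arr B"
    and "f \<in> Arr A \<Longrightarrow> Dom B (Fa f) = Fo (Dom A f)"
    and "f \<in> Arr A \<Longrightarrow> Cod B (Fa f) = Fo (Cod A f)"
    and "x \<in> Obj A \<Longrightarrow> Fa (Idn A x) = Idn B (Fo x)"
    and "f \<in> Arr A \<Longrightarrow> g \<in> Arr A \<Longrightarrow> Cod A f = Dom A g \<Longrightarrow>
           Fa (Comp A g f) = Comp B (Fa g) (Fa f)"
  using assms unfolding is_functor_def by auto

lemma is_lensD:
  assumes "is_lens A B Fo Fa P"
  shows "is_functor A B Fo Fa"
    and "x \<in> Obj A \<Longrightarrow> b \<in> Arr B \<Longrightarrow> Dom B b = Fo x \<Longrightarrow> P x b \<in> Arr A"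
    and "x \<in> Obj A \<Longrightarrow> b \<in> Arr B \<Longrightarrow> Dom B b = Fo x \<Longrightarrow> Dom A (P x b) = x"
    and "x \<in> Obj A \<Longrightarrow> b \<in> Arr B \<Longrightarrow> Dom B b = Fo x \<Longrightarrow> Fa (P x b) = b"
    and "x \<in> Obj A \<Longrightarrow> P x (Idn B (Fo x)) = Idn A x"
    and "x \<in> Obj A \<Longrightarrow> b \<in> Arr B \<Longrightarrow> b' \<in> Arr B \<Longrightarrow> Dom B b = Fo x \<Longrightarrow>
           Dom B b' = Fo (Cod A (P x b)) \<Longrightarrow>
           P x (Comp B b' b) = Comp A (P (Cod A (P x b)) b') (P x b)"
  using assms unfolding is_lens_def by auto

subsection \<open>Testing a coequaliser against the indiscrete category on two objects\<close>

text \<open>Arrow \<open>n\<close> is the unique arrow from \<open>n div 2\<close> to \<open>n mod 2\<close>.\<close>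

definition indiscrete_two :: "(nat, nat) cat" where
  "indiscrete_two = \<lparr>Obj = {0, 1}, Arr = {0, 1, 2, 3}, Dom = (\<lambda>f. f div 2),
     Cod = (\<lambda>f. f mod 2), Idn = (\<lambda>x. 3 * x), Comp = (\<lambda>g f. 2 * (f div 2) + g mod 2)\<rparr>"

lemma is_cat_indiscrete_two: "is_cat indiscrete_two"
  unfolding is_cat_def indiscrete_two_def by auto

definition indicator_obj :: "'o set \<Rightarrow> 'o \<Rightarrow> nat" where
  "indicator_obj S x = of_bool (x \<in> S)"

definition indicator_arr :: "('o, 'a) cat \<Rightarrow> 'o set \<Rightarrow> 'a \<Rightarrow> nat" where
  "indicator_arr C S f = 2 * indicator_obj S (Dom C f) + indicator_obj S (Cod C f)"

lemma is_functor_indicator: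
  assumes "is_cat C"
  shows "is_functor C indiscrete_two (indicator_obj S) (indicator_arr C S)"
  using assms unfolding is_functor_def is_cat_def indiscrete_two_def indicator_arr_def indicator_obj_def
  by auto

lemma cat_coequaliser_factor:
  fixes X :: "('x, 'y) cat"
  assumes "cat_coequaliser TYPE('x \<times> 'y) A B C F1o F1a F2o F2a Eo Ea"
    and "is_cat X" "is_functor B X Ko Ka"
    and "functor_eq A (Ko \<circ> F1o) (Ka \<circ> F1a) (Ko \<circ> F2o) (Ka \<circ> F2a)"
  obtains Lo La where "is_functor C X Lo La" "functor_eq B (Lo \<circ> Eo) (La \<circ> Ea) Ko Ka"
  using assms unfolding cat_coequaliser_def by blast

lemma cat_coequaliser_factor_unique:
  fixes X :: "('x, 'y) cat"
  assumes "cat_coequaliser TYPE('x \<times> 'y) A B C F1o F1a F2o F2a Eo Ea"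
    and "is_cat X" "is_functor B X Ko Ka"
    and "functor_eq A (Ko \<circ> F1o) (Ka \<circ> F1a) (Ko \<circ> F2o) (Ka \<circ> F2a)"
    and "is_functor C X Lo La" "functor_eq B (Lo \<circ> Eo) (La \<circ> Ea) Ko Ka"
    and "is_functor C X Lo' La'" "functor_eq B (Lo' \<circ> Eo) (La' \<circ> Ea) Ko Ka"
  shows "functor_eq C Lo La Lo' La'"
  using assms unfolding cat_coequaliser_def by blast

lemma coequaliser_obj_surj:
  assumes "is_cat B" "is_cat C"
    and coeq: "cat_coequaliser TYPE(nat \<times> nat) A B C F1o F1a F2o F2a Eo Ea"
    and "c \<in> Obj C"
  shows "\<exists>b \<in> Obj B. Eo b = c"
proof -
  let ?S = "Obj C - Eo ` Obj B"
  \<comment> \<open>The indicators of \<open>{}\<close> and of \<open>?S\<close> on C both restrict along E to the constant functor 0.\<close>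
  have E: "is_functor B C Eo Ea"
    using coeq unfolding cat_coequaliser_def by blast
  have "functor_eq A (indicator_obj {} \<circ> F1o) (indicator_arr B {} \<circ> F1a)
                     (indicator_obj {} \<circ> F2o) (indicator_arr B {} \<circ> F2a)"
    by (simp add: functor_eq_def indicator_arr_def indicator_obj_def)
  moreover have "functor_eq B (indicator_obj {} \<circ> Eo) (indicator_arr C {} \<circ> Ea)
                     (indicator_obj {}) (indicator_arr B {})"
    by (simp add: functor_eq_def indicator_arr_def indicator_obj_def)
  moreover have "functor_eq B (indicator_obj ?S \<circ> Eo) (indicator_arr C ?S \<circ> Ea)
                     (indicator_obj {}) (indicator_arr B {})"
    using \<open>is_cat B\<close>
    by (simp add: functor_eq_def indicator_arr_def indicator_obj_def is_functorD[OF E] is_catD)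
  ultimately have "functor_eq C (indicator_obj {}) (indicator_arr C {})
                     (indicator_obj ?S) (indicator_arr C ?S)"
    using cat_coequaliser_factor_unique[OF coeq is_cat_indiscrete_two
        is_functor_indicator[OF \<open>is_cat B\<close>] _ is_functor_indicator[OF \<open>is_cat C\<close>] _
        is_functor_indicator[OF \<open>is_cat C\<close>]]
    by blast
  then show ?thesis
    using \<open>c \<in> Obj C\<close> unfolding functor_eq_def indicator_obj_def by force
qed

lemma coequaliser_saturated_closed:
  assumes "is_cat A" "is_cat B"
    and "is_functor A B F1o F1a" "is_functor A B F2o F2a"
    and coeq: "cat_coequaliser TYPE(nat \<times> nat) A B C F1o F1a F2o F2a Eo Ea"
    and saturated: "\<And>a. a \<in> Obj A \<Longrightarrow> F1o a \<in> S \<longleftrightarrow> F2o a \<in> S"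
    and "b \<in> Obj B" "b' \<in> Obj B" "Eo b = Eo b'" "b \<in> S"
  shows "b' \<in> S"
proof -
  have "functor_eq A (indicator_obj S \<circ> F1o) (indicator_arr B S \<circ> F1a)
      (indicator_obj S \<circ> F2o) (indicator_arr B S \<circ> F2a)"
    using assms(1-4) saturated unfolding functor_eq_def indicator_arr_def indicator_obj_def
    by (auto simp: is_functorD is_catD)
  then obtain Lo La where "functor_eq B (Lo \<circ> Eo) (La \<circ> Ea) (indicator_obj S) (indicator_arr B S)"
    using cat_coequaliser_factor[OF coeq is_cat_indiscrete_two is_functor_indicator[OF \<open>is_cat B\<close>]]
    by blast
  then have "indicator_obj S b = Lo (Eo b)" "Lo (Eo b') = indicator_obj S b'"
    using assms(7,8) unfolding functor_eq_def by auto
  then have "b \<in> S \<longleftrightarrow> b' \<in> S"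
    using \<open>Eo b = Eo b'\<close> by (simp add: indicator_obj_def of_bool_eq_iff)
  with \<open>b \<in> S\<close> show ?thesis by blast
qed

subsection \<open>Putting along G is invariant under E\<close>

lemma coequalised_put_F1_F2:
  assumes F1: "is_lens A B F1o F1a P1" and F2: "is_lens A B F2o F2a P2"
    and G: "is_lens B D Go Ga PG"
    and GF: "lens_eq A D (Go \<circ> F1o) (Ga \<circ> F1a) (lens_comp_put F1o P1 PG)
                         (Go \<circ> F2o) (Ga \<circ> F2a) (lens_comp_put F2o P2 PG)"
    and EF: "\<And>f. f \<in> Arr A \<Longrightarrow> Ea (F1a f) = Ea (F2a f)"
    and "a \<in> Obj A" "d \<in> Arr D" "Dom D d = Go (F1o a)"
  shows "Ea (PG (F1o a) d) = Ea (PG (F2o a) d)"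
proof -
  have "Go (F1o a) = Go (F2o a)"
    and lifts_agree: "P1 a (PG (F1o a) d) = P2 a (PG (F2o a) d)"
    using GF assms(6-8) unfolding lens_eq_def functor_eq_def lens_comp_put_def by auto
  have F1a_obj: "F1o a \<in> Obj B" and F2a_obj: "F2o a \<in> Obj B"
    using assms(6) is_lensD(1)[OF F1] is_lensD(1)[OF F2] by (simp_all add: is_functorD)
  have lift1: "P1 a (PG (F1o a) d) \<in> Arr A" "F1a (P1 a (PG (F1o a) d)) = PG (F1o a) d"
    using F1a_obj assms(6-8) by (simp_all add: is_lensD[OF F1] is_lensD[OF G])
  have lift2: "F2a (P2 a (PG (F2o a) d)) = PG (F2o a) d"
    using F2a_obj assms(6-8) \<open>Go (F1o a) = Go (F2o a)\<close>
    by (simp add: is_lensD[OF F2] is_lensD[OF G])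
  have "Ea (PG (F1o a) d) = Ea (F1a (P1 a (PG (F1o a) d)))"
    by (simp only: lift1(2))
  also have "\<dots> = Ea (F2a (P1 a (PG (F1o a) d)))"
    by (rule EF[OF lift1(1)])
  also have "\<dots> = Ea (PG (F2o a) d)"
    by (simp only: lifts_agree lift2)
  finally show ?thesis .
qed

lemma coequaliser_put_invariant:
  assumes "is_cat A" "is_cat B"
    and F1: "is_lens A B F1o F1a P1" and F2: "is_lens A B F2o F2a P2"
    and G: "is_lens B D Go Ga PG"
    and GF: "lens_eq A D (Go \<circ> F1o) (Ga \<circ> F1a) (lens_comp_put F1o P1 PG)
                         (Go \<circ> F2o) (Ga \<circ> F2a) (lens_comp_put F2o P2 PG)"
    and coeq: "cat_coequaliser TYPE(nat \<times> nat) A B C F1o F1a F2o F2a Eo Ea"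
    and "b \<in> Obj B" "b' \<in> Obj B" "Eo b = Eo b'" "d \<in> Arr D" "Dom D d = Go b"
  shows "Ea (PG b d) = Ea (PG b' d)"
proof -
  let ?S = "{x. Go x = Go b \<and> Ea (PG x d) = Ea (PG b d)}"
  have EF: "Ea (F1a f) = Ea (F2a f)" if "f \<in> Arr A" for f
    using coeq that unfolding cat_coequaliser_def functor_eq_def by auto
  have "Go (F1o a) = Go (F2o a)" if "a \<in> Obj A" for a
    using GF that unfolding lens_eq_def functor_eq_def by auto
  then have "F1o a \<in> ?S \<longleftrightarrow> F2o a \<in> ?S" if "a \<in> Obj A" for a
    using coequalised_put_F1_F2[OF F1 F2 G GF EF that \<open>d \<in> Arr D\<close>] that \<open>Dom D d = Go b\<close> by auto
  then have "b' \<in> ?S"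
    using coequaliser_saturated_closed[OF assms(1,2) is_lensD(1)[OF F1] is_lensD(1)[OF F2] coeq]
      assms(8-10) by blast
  then show ?thesis by simp
qed

subsection \<open>Descending a lens along a functor surjective on objects\<close>

locale lens_descent =
  fixes B :: "('ob, 'ab) cat" and C :: "('oc, 'ac) cat" and D :: "('od, 'ad) cat"
    and Eo :: "'ob \<Rightarrow> 'oc" and Ea :: "'ab \<Rightarrow> 'ac"
    and Go :: "'ob \<Rightarrow> 'od" and Ga :: "'ab \<Rightarrow> 'ad" and PG :: "'ob \<Rightarrow> 'ad \<Rightarrow> 'ab"
    and Ho :: "'oc \<Rightarrow> 'od" and Ha :: "'ac \<Rightarrow> 'ad"
  assumes cat_B: "is_cat B" and cat_D: "is_cat D"
    and E: "is_functor B C Eo Ea"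
    and G: "is_lens B D Go Ga PG"
    and H: "is_functor C D Ho Ha"
    and HE: "functor_eq B (Ho \<circ> Eo) (Ha \<circ> Ea) Go Ga"
    and E_surj: "\<And>c. c \<in> Obj C \<Longrightarrow> \<exists>b \<in> Obj B. Eo b = c"
    and put_compat: "\<And>b b' d. b \<in> Obj B \<Longrightarrow> b' \<in> Obj B \<Longrightarrow> Eo b = Eo b' \<Longrightarrow>
                        d \<in> Arr D \<Longrightarrow> Dom D d = Go b \<Longrightarrow> Ea (PG b d) = Ea (PG b' d)"
begin

definition put :: "'oc \<Rightarrow> 'ad \<Rightarrow> 'ac" where
  "put c d = Ea (PG (SOME b. b \<in> Obj B \<and> Eo b = c) d)"

lemma HE_obj: "b \<in> Obj B \<Longrightarrow> Ho (Eo b) = Go b"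
  and HE_arr: "f \<in> Arr B \<Longrightarrow> Ha (Ea f) = Ga f"
  using HE unfolding functor_eq_def by auto

lemma put_Eo:
  assumes "b \<in> Obj B" "d \<in> Arr D" "Dom D d = Go b"
  shows "put (Eo b) d = Ea (PG b d)"
proof -
  define b' where "b' = (SOME b'. b' \<in> Obj B \<and> Eo b' = Eo b)"
  have "b' \<in> Obj B \<and> Eo b' = Eo b"
    unfolding b'_def by (rule someI[of _ b]) (simp add: assms(1))
  then have "Ea (PG b d) = Ea (PG b' d)"
    using put_compat[OF assms(1)] assms(2,3) by simp
  then show ?thesis
    unfolding put_def b'_def[symmetric] by simp
qed

lemma put_unique:
  assumes Q: "\<And>b d. b \<in> Obj B \<Longrightarrow> d \<in> Arr D \<Longrightarrow> Dom D d = Go b \<Longrightarrow> Q (Eo b) d = Ea (PG b d)"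
    and "c \<in> Obj C" "d \<in> Arr D" "Dom D d = Ho c"
  shows "Q c d = put c d"
proof -
  obtain b where b: "b \<in> Obj B" "Eo b = c"
    using E_surj[OF \<open>c \<in> Obj C\<close>] by blast
  then have "Dom D d = Go b"
    using HE_obj[OF b(1)] \<open>Dom D d = Ho c\<close> by simp
  then show ?thesis
    using Q[OF b(1) \<open>d \<in> Arr D\<close>] put_Eo[OF b(1) \<open>d \<in> Arr D\<close>] b(2) by simp
qed

lemma put_lift:
  assumes "c \<in> Obj C" "d \<in> Arr D" "Dom D d = Ho c"
  shows "put c d \<in> Arr C" "Dom C (put c d) = c" "Ha (put c d) = d"
proof -
  obtain b where b: "b \<in> Obj B" "Eo b = c"
    using E_surj[OF \<open>c \<in> Obj C\<close>] by blast
  then have d: "Dom D d = Go b"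
    using HE_obj[OF b(1)] \<open>Dom D d = Ho c\<close> by simp
  then have "put c d = Ea (PG b d)"
    using put_Eo[OF b(1) \<open>d \<in> Arr D\<close>] b(2) by simp
  then show "put c d \<in> Arr C" "Dom C (put c d) = c" "Ha (put c d) = d"
    using b d \<open>d \<in> Arr D\<close> by (simp_all add: is_lensD[OF G] is_functorD[OF E] HE_arr)
qed

lemma put_Idn:
  assumes "c \<in> Obj C"
  shows "put c (Idn D (Ho c)) = Idn C c"
proof -
  obtain b where b: "b \<in> Obj B" "Eo b = c"
    using E_surj[OF \<open>c \<in> Obj C\<close>] by blast
  have "Go b \<in> Obj D"
    by (rule is_functorD(1)[OF is_lensD(1)[OF G] b(1)])
  then have "Idn D (Go b) \<in> Arr D" "Dom D (Idn D (Go b)) = Go b"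
    by (simp_all add: is_catD[OF cat_D])
  then have "put c (Idn D (Ho c)) = Ea (PG b (Idn D (Go b)))"
    using put_Eo[OF b(1)] b HE_obj[OF b(1)] by simp
  also have "\<dots> = Idn C c"
    using b by (simp add: is_lensD[OF G] is_functorD[OF E])
  finally show ?thesis .
qed

lemma put_Comp:
  assumes "c \<in> Obj C" "d \<in> Arr D" "d' \<in> Arr D" "Dom D d = Ho c"
    and d': "Dom D d' = Ho (Cod C (put c d))"
  shows "put c (Comp D d' d) = Comp C (put (Cod C (put c d)) d') (put c d)"
proof -
  obtain b where b: "b \<in> Obj B" "Eo b = c"
    using E_surj[OF \<open>c \<in> Obj C\<close>] by blast
  then have d: "Dom D d = Go b"
    using HE_obj[OF b(1)] \<open>Dom D d = Ho c\<close> by simp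
  define b1 where "b1 = Cod B (PG b d)"
  have lift: "PG b d \<in> Arr B" "Ga (PG b d) = d"
    using b d \<open>d \<in> Arr D\<close> by (simp_all add: is_lensD[OF G])
  have put_d: "put c d = Ea (PG b d)"
    using put_Eo[OF b(1) \<open>d \<in> Arr D\<close> d] b(2) by simp
  have "b1 \<in> Obj B"
    unfolding b1_def using lift by (simp add: is_catD[OF cat_B])
  have cod_put: "Cod C (put c d) = Eo b1"
    unfolding put_d b1_def using lift by (simp add: is_functorD[OF E])
  then have d'_b1: "Dom D d' = Go b1"
    using d' HE_obj[OF \<open>b1 \<in> Obj B\<close>] by simp
  have "Cod D d = Go b1"
    using lift unfolding b1_def by (metis is_functorD(4)[OF is_lensD(1)[OF G]])
  then have "Comp D d' d \<in> Arr D" "Dom D (Comp D d' d) = Go b"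
    using \<open>d \<in> Arr D\<close> \<open>d' \<in> Arr D\<close> d d'_b1 by (simp_all add: is_catD[OF cat_D])
  then have "put c (Comp D d' d) = Ea (PG b (Comp D d' d))"
    using put_Eo[OF b(1)] b(2) by simp
  also have "\<dots> = Ea (Comp B (PG b1 d') (PG b d))"
    using b(1) d d'_b1 \<open>d \<in> Arr D\<close> \<open>d' \<in> Arr D\<close> unfolding b1_def by (simp add: is_lensD[OF G])
  also have "\<dots> = Comp C (Ea (PG b1 d')) (Ea (PG b d))"
    using lift \<open>b1 \<in> Obj B\<close> d'_b1 \<open>d' \<in> Arr D\<close> unfolding b1_def
    by (simp add: is_lensD[OF G] is_functorD[OF E])
  also have "\<dots> = Comp C (put (Cod C (put c d)) d') (put c d)"
    using put_Eo[OF \<open>b1 \<in> Obj B\<close> \<open>d' \<in> Arr D\<close> d'_b1] put_d cod_put by simp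
  finally show ?thesis .
qed

lemma is_lens_put: "is_lens C D Ho Ha put"
  unfolding is_lens_def using H put_lift put_Idn put_Comp by blast

end

theorem lemma4p6:
  fixes A :: "('oa, 'aa) cat" and B :: "('ob, 'ab) cat"
    and C :: "('oc, 'ac) cat" and D :: "('od, 'ad) cat"
    and F1o F2o :: "'oa \<Rightarrow> 'ob" and F1a F2a :: "'aa \<Rightarrow> 'ab" and P1 P2 :: "'oa \<Rightarrow> 'ab \<Rightarrow> 'aa"
    and Eo :: "'ob \<Rightarrow> 'oc" and Ea :: "'ab \<Rightarrow> 'ac" and PE :: "'ob \<Rightarrow> 'ac \<Rightarrow> 'ab"
    and Go :: "'ob \<Rightarrow> 'od" and Ga :: "'ab \<Rightarrow> 'ad" and PG :: "'ob \<Rightarrow> 'ad \<Rightarrow> 'ab"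
    and Ho :: "'oc \<Rightarrow> 'od" and Ha :: "'ac \<Rightarrow> 'ad"
  assumes cats: "is_cat A" "is_cat B" "is_cat C" "is_cat D"
    and F1: "is_lens A B F1o F1a P1"
    and F2: "is_lens A B F2o F2a P2"
    and E: "is_lens B C Eo Ea PE"
    and EF: "lens_eq A C (Eo \<circ> F1o) (Ea \<circ> F1a) (lens_comp_put F1o P1 PE)
                         (Eo \<circ> F2o) (Ea \<circ> F2a) (lens_comp_put F2o P2 PE)"
    and coeq_nat: "cat_coequaliser TYPE(nat \<times> nat) A B C F1o F1a F2o F2a Eo Ea"
    and coeq_D: "cat_coequaliser TYPE('od \<times> 'ad) A B C F1o F1a F2o F2a Eo Ea"
    and G: "is_lens B D Go Ga PG"
    and GF: "lens_eq A D (Go \<circ> F1o) (Ga \<circ> F1a) (lens_comp_put F1o P1 PG)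
                         (Go \<circ> F2o) (Ga \<circ> F2a) (lens_comp_put F2o P2 PG)"
    and H: "is_functor C D Ho Ha"
    and HE: "functor_eq B (Ho \<circ> Eo) (Ha \<circ> Ea) Go Ga"
  shows "(\<exists>PH. is_lens C D Ho Ha PH \<and>
            (\<forall>b \<in> Obj B. \<forall>d \<in> Arr D. Dom D d = Go b \<longrightarrow> PH (Eo b) d = Ea (PG b d))) \<and>
         (\<forall>PH PH'.
            is_lens C D Ho Ha PH \<longrightarrow>
            (\<forall>b \<in> Obj B. \<forall>d \<in> Arr D. Dom D d = Go b \<longrightarrow> PH (Eo b) d = Ea (PG b d)) \<longrightarrow>
            is_lens C D Ho Ha PH' \<longrightarrow>
            (\<forall>b \<in> Obj B. \<forall>d \<in> Arr D. Dom D d = Go b \<longrightarrow> PH' (Eo b) d = Ea (PG b d)) \<longrightarrow>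
            (\<forall>c \<in> Obj C. \<forall>d \<in> Arr D. Dom D d = Ho c \<longrightarrow> PH c d = PH' c d))"
proof -
  interpret lens_descent B C D Eo Ea Go Ga PG Ho Ha
  proof
    show "is_functor B C Eo Ea"
      using E by (rule is_lensD(1))
    show "\<exists>b \<in> Obj B. Eo b = c" if "c \<in> Obj C" for c
      using coequaliser_obj_surj[OF cats(2,3) coeq_nat that] .
    show "Ea (PG b d) = Ea (PG b' d)"
      if "b \<in> Obj B" "b' \<in> Obj B" "Eo b = Eo b'" "d \<in> Arr D" "Dom D d = Go b" for b b' d
      using coequaliser_put_invariant[OF cats(1,2) F1 F2 G GF coeq_nat that] .
  qed (use cats G H HE in auto)
  have agrees: "\<forall>b \<in> Obj B. \<forall>d \<in> Arr D. Dom D d = Go b \<longrightarrow> put (Eo b) d = Ea (PG b d)"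
    using put_Eo by blast
  have unique: "PH c d = PH' c d"
    if "\<forall>b \<in> Obj B. \<forall>d \<in> Arr D. Dom D d = Go b \<longrightarrow> PH (Eo b) d = Ea (PG b d)"
      and "\<forall>b \<in> Obj B. \<forall>d \<in> Arr D. Dom D d = Go b \<longrightarrow> PH' (Eo b) d = Ea (PG b d)"
      and "c \<in> Obj C" "d \<in> Arr D" "Dom D d = Ho c" for PH PH' c d
    using put_unique[of PH c d] put_unique[of PH' c d] that by simp
  show ?thesis
    using is_lens_put agrees unique by blast
qed

end
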